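(* Let $n,m\in\mathbb{N}$ with $\gcd(n,m)=1$ and let $\{R_j^{nm,n}\}_{j\in I_{nm,n}}$ be a system of representatives of the right cosets in $\Gamma_0(nm)\backslash\Gamma_0(n)$. Then for every $j\in I_{nm,n}$ there exists a matrix $A(j)\in X_m^\star$ such that $B_m R_j^{nm,n}A(j)^{-1}\in\Gamma_0(n)$, and the map $j\mapsto A(j)$ is a bijection from $I_{nm,n}$ onto $X_m^\star$.
   Context: $\Gamma_0(n)=\{\begin{pmatrix}a&b\\c&d\end{pmatrix}\in SL(2,\mathbb{Z}):n\mid c\}$. $B_m=\begin{pmatrix}m&0\\0&1\end{pmatrix}$. $X_m^\star=\{\begin{pmatrix}c&b\\0&m/c\end{pmatrix}:c\ge1,\ c\mid m,\ 0\le b\le m/c-1,\ \gcd(c,b,m/c)=1\}$. $I_{nm,n}=\{1,\dots,[\Gamma_0(n):\Gamma_0(nm)]\}$. *)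

theory Defs
  imports "HOL-Analysis.Analysis"
begin

text \<open>2x2 matrices are elements of type 'a^2^2 (rows indexed first):
  the entry in row i, column j of M is M $ i $ j.\<close>

definition mat2 :: "'a::zero \<Rightarrow> 'a \<Rightarrow> 'a \<Rightarrow> 'a \<Rightarrow> 'a^2^2" where
  "mat2 a b c d = vector [vector [a, b], vector [c, d]]"

definition ratm :: "int^2^2 \<Rightarrow> rat^2^2" where
  "ratm M = (\<chi> i j. of_int (M $ i $ j))"

definition SL2Z :: "(int^2^2) set" where
  "SL2Z = {M. det M = 1}"

definition Gamma0 :: "nat \<Rightarrow> (int^2^2) set" where
  "Gamma0 n = {M \<in> SL2Z. int n dvd M $ 2 $ 1}"

definition Bm :: "nat \<Rightarrow> int^2^2" where
  "Bm m = mat2 (int m) 0 0 1"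

definition Xstar :: "nat \<Rightarrow> (int^2^2) set" where
  "Xstar m = {mat2 c b 0 (int m div c) | c b.
      c \<ge> 1 \<and> c dvd int m \<and> 0 \<le> b \<and> b \<le> int m div c - 1
      \<and> gcd (gcd c b) (int m div c) = 1}"

definition rcoset2 :: "(int^2^2) set \<Rightarrow> int^2^2 \<Rightarrow> (int^2^2) set" where
  "rcoset2 H g = (\<lambda>h. h ** g) ` H"

definition rcosets2 :: "(int^2^2) set \<Rightarrow> (int^2^2) set \<Rightarrow> (int^2^2) set set" where
  "rcosets2 H G = rcoset2 H ` G"

definition idx :: "nat \<Rightarrow> nat \<Rightarrow> nat" where
  "idx n m = card (rcosets2 (Gamma0 (n * m)) (Gamma0 n))"

definition Iset :: "nat \<Rightarrow> nat \<Rightarrow> nat set" where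
  "Iset n m = {1 .. idx n m}"

definition rep_system :: "nat \<Rightarrow> nat \<Rightarrow> (nat \<Rightarrow> int^2^2) \<Rightarrow> bool" where
  "rep_system n m R \<longleftrightarrow>
     (\<forall>j \<in> Iset n m. R j \<in> Gamma0 n) \<and>
     bij_betw (\<lambda>j. rcoset2 (Gamma0 (n * m)) (R j)) (Iset n m)
              (rcosets2 (Gamma0 (n * m)) (Gamma0 n))"

end

theory Submission
  imports Defs "HOL-Computational_Algebra.Primes"
begin

(* For g in Gamma_0(n) the integer matrix B_m g has determinant m, so its orbit under left
   multiplication by SL(2,Z) contains exactly one Hermite normal form [[c, b], [0, e]] with c > 0
   and 0 <= b < e; A(j) is the normal form of B_m R_j. The bottom row of B_m g is that of g, which
   is primitive, hence so is A(j), i.e. A(j) lies in X_m^star. The lower left entry of g is that of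
   the transition matrix times c, a divisor of m prime to n, so the transition matrix lies in
   Gamma_0(n). Since B_m Gamma_0(m) B_m^-1 lies in SL(2,Z), the normal form only depends on the
   coset Gamma_0(nm) R_j; conversely equal normal forms force R_i R_j^-1 into Gamma_0(m), hence
   into Gamma_0(nm) by coprimality. Surjectivity is an explicit Bezout construction. *)

lemma mat2_nth [simp]:
  "mat2 a b c d $ 1 $ 1 = a" "mat2 a b c d $ 1 $ 2 = b"
  "mat2 a b c d $ 2 $ 1 = c" "mat2 a b c d $ 2 $ 2 = d"
  by (simp_all add: mat2_def)

lemma matrix2_eqI:
  fixes M N :: "'a^2^2"
  assumes "M$1$1 = N$1$1" "M$1$2 = N$1$2" "M$2$1 = N$2$1" "M$2$2 = N$2$2"
  shows "M = N"
  using assms by (simp add: vec_eq_iff forall_2)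

lemma matrix2_mult_nth [simp]:
  fixes M N :: "'a::semiring_1^2^2"
  shows "(M ** N)$1$1 = M$1$1 * N$1$1 + M$1$2 * N$2$1"
    "(M ** N)$1$2 = M$1$1 * N$1$2 + M$1$2 * N$2$2"
    "(M ** N)$2$1 = M$2$1 * N$1$1 + M$2$2 * N$2$1"
    "(M ** N)$2$2 = M$2$1 * N$1$2 + M$2$2 * N$2$2"
  by (simp_all add: matrix_matrix_mult_def sum_2)

lemma mat1_matrix2_nth [simp]:
  "(mat 1 :: 'a::zero_neq_one^2^2)$1$1 = 1" "(mat 1 :: 'a::zero_neq_one^2^2)$1$2 = 0"
  "(mat 1 :: 'a::zero_neq_one^2^2)$2$1 = 0" "(mat 1 :: 'a::zero_neq_one^2^2)$2$2 = 1"
  by (simp_all add: mat_def)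

lemma matrix_inv_right:
  assumes "invertible A"
  shows "A ** matrix_inv A = mat 1"
  using assms unfolding invertible_def matrix_inv_def by (rule someI_ex [THEN conjunct1])

lemma ratm_nth [simp]: "ratm M $ i $ j = of_int (M $ i $ j)"
  by (simp add: ratm_def)

lemma ratm_mult: "ratm (M ** N) = ratm M ** ratm N"
  by (rule matrix2_eqI) simp_all

lemma det_ratm: "det (ratm M) = of_int (det M)"
  by (simp add: det_2)

lemma ratm_mult_matrix_inv:
  assumes "M = D ** A" and "det A \<noteq> 0"
  shows "ratm M ** matrix_inv (ratm A) = ratm D"
proof -
  have "invertible (ratm A)"
    using assms(2) by (simp add: invertible_det_nz det_ratm)
  then show ?thesis
    by (simp add: assms(1) ratm_mult matrix_inv_right flip: matrix_mul_assoc)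
qed

definition adjugate2 :: "'a::comm_ring_1^2^2 \<Rightarrow> 'a^2^2" where
  "adjugate2 M = mat2 (M$2$2) (- M$1$2) (- M$2$1) (M$1$1)"

lemma adjugate2_nth [simp]:
  "adjugate2 M $1$1 = M$2$2" "adjugate2 M $1$2 = - M$1$2"
  "adjugate2 M $2$1 = - M$2$1" "adjugate2 M $2$2 = M$1$1"
  by (simp_all add: adjugate2_def)

lemma det_adjugate2: "det (adjugate2 M) = det M"
  by (simp add: det_2 algebra_simps)

lemma adjugate2_mult_self: "det M = 1 \<Longrightarrow> adjugate2 M ** M = mat 1"
  by (rule matrix2_eqI) (simp_all add: det_2 algebra_simps)

lemma mult_adjugate2_self: "det M = 1 \<Longrightarrow> M ** adjugate2 M = mat 1"
  by (rule matrix2_eqI) (simp_all add: det_2 algebra_simps)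

section \<open>Congruence subgroups and their right cosets\<close>

lemma mem_SL2Z [simp]: "M \<in> SL2Z \<longleftrightarrow> det M = 1"
  by (simp add: SL2Z_def)

lemma mem_Gamma0: "M \<in> Gamma0 n \<longleftrightarrow> det M = 1 \<and> int n dvd M$2$1"
  by (simp add: Gamma0_def)

lemma mat1_in_Gamma0: "mat 1 \<in> Gamma0 n"
  by (simp add: mem_Gamma0 det_2)

lemma Gamma0_mult: "M \<in> Gamma0 n \<Longrightarrow> N \<in> Gamma0 n \<Longrightarrow> M ** N \<in> Gamma0 n"
  by (simp add: mem_Gamma0 det_mul)

lemma Gamma0_adjugate2: "M \<in> Gamma0 n \<Longrightarrow> adjugate2 M \<in> Gamma0 n"
  by (simp add: mem_Gamma0 det_adjugate2)

lemma Gamma0_Int_coprime: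
  assumes "coprime n m"
  shows "Gamma0 n \<inter> Gamma0 m = Gamma0 (n * m)"
proof -
  have "int n dvd x \<and> int m dvd x \<longleftrightarrow> int n * int m dvd x" for x
    using assms by (metis coprime_int_iff divides_mult dvd_mult_left dvd_mult_right of_nat_mult)
  then show ?thesis
    by (simp add: mem_Gamma0 set_eq_iff conj_ac)
qed

lemma rcoset2_Gamma0_mult:
  assumes "H \<in> Gamma0 n"
  shows "rcoset2 (Gamma0 n) (H ** M) = rcoset2 (Gamma0 n) M"
proof
  show "rcoset2 (Gamma0 n) (H ** M) \<subseteq> rcoset2 (Gamma0 n) M"
    unfolding rcoset2_def using assms Gamma0_mult by (force simp: matrix_mul_assoc)
  show "rcoset2 (Gamma0 n) M \<subseteq> rcoset2 (Gamma0 n) (H ** M)"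
  proof
    fix X assume "X \<in> rcoset2 (Gamma0 n) M"
    then obtain K where K: "K \<in> Gamma0 n" "X = K ** M"
      unfolding rcoset2_def by blast
    have "(K ** adjugate2 H) ** (H ** M) = K ** ((adjugate2 H ** H) ** M)"
      by (simp add: matrix_mul_assoc)
    then have "X = (K ** adjugate2 H) ** (H ** M)"
      using K(2) assms by (simp add: mem_Gamma0 adjugate2_mult_self)
    moreover have "K ** adjugate2 H \<in> Gamma0 n"
      using K(1) assms by (simp add: Gamma0_mult Gamma0_adjugate2)
    ultimately show "X \<in> rcoset2 (Gamma0 n) (H ** M)"
      unfolding rcoset2_def by blast
  qed
qed

lemma rcoset2_Gamma0_eqD:
  assumes "rcoset2 (Gamma0 n) M = rcoset2 (Gamma0 n) N"
  obtains H where "H \<in> Gamma0 n" "M = H ** N"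
proof -
  have "M \<in> rcoset2 (Gamma0 n) M"
    unfolding rcoset2_def using mat1_in_Gamma0 by (metis image_eqI matrix_mul_lid)
  then show ?thesis
    using assms that unfolding rcoset2_def by auto
qed

section \<open>Hermite normal form\<close>

definition hermite_normal :: "int^2^2 \<Rightarrow> bool" where
  "hermite_normal A \<longleftrightarrow> A$2$1 = 0 \<and> 0 < A$1$1 \<and> 0 \<le> A$1$2 \<and> A$1$2 < A$2$2"

lemma ex_SL2Z_upper_triangular:
  fixes M :: "int^2^2"
  assumes "0 < det M"
  shows "\<exists>D T. D \<in> SL2Z \<and> M = D ** T \<and> T$2$1 = 0 \<and> 0 < T$1$1 \<and> 0 < T$2$2"
proof -
  define x y z w where "x = M$1$1" "y = M$1$2" "z = M$2$1" "w = M$2$2"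
  have det_M: "det M = x * w - y * z"
    by (simp add: det_2 x_y_z_w_def)
  define g where "g = gcd x z"
  have "g \<noteq> 0"
    using assms by (auto simp: g_def det_M)
  then have g_pos: "0 < g"
    by (simp add: g_def order_less_le)
  obtain x' z' where x': "x = g * x'" and z': "z = g * z'"
    unfolding g_def by (meson gcd_dvd1 gcd_dvd2 dvdE)
  obtain u v where "u * x + v * z = g"
    using bezout_int [of x z] unfolding g_def by blast
  then have uv: "u * x' + v * z' = 1"
    using \<open>g \<noteq> 0\<close> by (simp add: x' z' algebra_simps flip: distrib_left)
  define e where "e = x' * w - z' * y"
  have "g * e = det M"
    by (simp add: det_M e_def x' z' algebra_simps)
  then have e_pos: "0 < e"
    using assms g_pos by (metis zero_less_mult_pos)
  define D T where "D = mat2 x' (- v) z' u" "T = mat2 g (u * y + v * w) 0 e"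
  have "D \<in> SL2Z"
    using uv by (simp add: D_T_def det_2 algebra_simps)
  moreover have "M = D ** T"
  proof (rule matrix2_eqI)
    have "x' * (u * y + v * w) - v * e = y * (u * x' + v * z')"
      by (simp add: e_def algebra_simps)
    then show "M$1$2 = (D ** T)$1$2"
      by (simp add: D_T_def uv flip: x_y_z_w_def)
    have "z' * (u * y + v * w) + u * e = w * (u * x' + v * z')"
      by (simp add: e_def algebra_simps)
    then show "M$2$2 = (D ** T)$2$2"
      by (simp add: D_T_def uv flip: x_y_z_w_def)
  qed (simp_all add: D_T_def mult.commute flip: x' z' x_y_z_w_def)
  moreover have "T$2$1 = 0" "0 < T$1$1" "0 < T$2$2"
    using g_pos e_pos by (simp_all add: D_T_def)
  ultimately show ?thesis
    by blast
qed

lemma ex_hermite_decomposition: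
  fixes M :: "int^2^2"
  assumes "0 < det M"
  shows "\<exists>D A. D \<in> SL2Z \<and> hermite_normal A \<and> M = D ** A"
proof -
  obtain D T where D: "D \<in> SL2Z" "M = D ** T" and T: "T$2$1 = 0" "0 < T$1$1" "0 < T$2$2"
    using ex_SL2Z_upper_triangular [OF assms] by blast
  define U A where "U = mat2 1 (T$1$2 div T$2$2) 0 1"
    "A = mat2 (T$1$1) (T$1$2 mod T$2$2) 0 (T$2$2)"
  have "det U = 1"
    by (simp add: U_A_def det_2)
  then have "D ** U \<in> SL2Z"
    using D(1) by (simp add: det_mul)
  moreover have "T = U ** A"
    using T by (intro matrix2_eqI) (simp_all add: U_A_def mult.commute)
  then have "M = (D ** U) ** A"
    using D(2) by (simp add: matrix_mul_assoc)
  moreover have "hermite_normal A"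
    using T by (simp add: U_A_def hermite_normal_def)
  ultimately show ?thesis
    by blast
qed

lemma hermite_normal_stabilizer:
  assumes "G \<in> SL2Z" and A: "hermite_normal A" and GA: "hermite_normal (G ** A)"
  shows "G = mat 1"
proof -
  have A22: "0 < A$2$2"
    using A by (simp add: hermite_normal_def)
  have G21: "G$2$1 = 0"
    using A GA by (simp add: hermite_normal_def)
  then have "G$1$1 * G$2$2 = 1"
    using assms(1) by (simp add: det_2)
  moreover have "0 < G$1$1"
    using A GA G21 by (simp add: hermite_normal_def zero_less_mult_iff)
  ultimately have G11: "G$1$1 = 1" and G22: "G$2$2 = 1"
    by (auto simp: pos_zmult_eq_1_iff)
  have "0 \<le> A$1$2 + G$1$2 * A$2$2" "A$1$2 + G$1$2 * A$2$2 < A$2$2"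
    using A GA G21 G11 G22 by (simp_all add: hermite_normal_def)
  moreover have "0 \<le> A$1$2" "A$1$2 < A$2$2"
    using A by (simp_all add: hermite_normal_def)
  ultimately have "(- 1) * A$2$2 < G$1$2 * A$2$2" "G$1$2 * A$2$2 < 1 * A$2$2"
    by linarith+
  then have "- 1 < G$1$2" "G$1$2 < 1"
    using A22 by (meson mult_right_less_imp_less order_less_imp_le)+
  then have "G$1$2 = 0"
    by simp
  with G11 G21 G22 show ?thesis
    by (intro matrix2_eqI) simp_all
qed

text \<open>Only meaningful for \<^term>\<open>0 < det M\<close>; otherwise no such \<^term>\<open>A\<close> exists.\<close>

definition hermite_form :: "int^2^2 \<Rightarrow> int^2^2" where
  "hermite_form M = (THE A. hermite_normal A \<and> (\<exists>D \<in> SL2Z. M = D ** A))"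

lemma hermite_form_eqI:
  assumes "D \<in> SL2Z" and "hermite_normal A" and "M = D ** A"
  shows "hermite_form M = A"
  unfolding hermite_form_def
proof (rule the_equality)
  fix A' assume "hermite_normal A' \<and> (\<exists>D' \<in> SL2Z. M = D' ** A')"
  then obtain D' where A': "hermite_normal A'" and D': "D' \<in> SL2Z" "M = D' ** A'"
    by blast
  have "A' = adjugate2 D' ** (D' ** A')"
    using D'(1) by (simp add: matrix_mul_assoc adjugate2_mult_self)
  also have "\<dots> = adjugate2 D' ** (D ** A)"
    using D'(2) assms(3) by simp
  also have "\<dots> = (adjugate2 D' ** D) ** A"
    by (simp add: matrix_mul_assoc)
  finally have "A' = (adjugate2 D' ** D) ** A" .
  moreover have "adjugate2 D' ** D \<in> SL2Z"
    using D'(1) assms(1) by (simp add: det_mul det_adjugate2)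
  ultimately show "A' = A"
    using hermite_normal_stabilizer assms(2) A' by (metis matrix_mul_lid)
qed (use assms in blast)

lemma hermite_form:
  assumes "0 < det M"
  obtains D where "D \<in> SL2Z" "hermite_normal (hermite_form M)" "M = D ** hermite_form M"
  using ex_hermite_decomposition [OF assms] hermite_form_eqI by metis

lemma hermite_form_SL2Z_mult:
  assumes "H \<in> SL2Z" and "0 < det M"
  shows "hermite_form (H ** M) = hermite_form M"
proof -
  define A where "A = hermite_form M"
  obtain D where D: "D \<in> SL2Z" "hermite_normal A" "M = D ** A"
    using hermite_form [OF assms(2), folded A_def] .
  have HD: "H ** D \<in> SL2Z"
    using D(1) assms(1) by (simp add: det_mul)
  have "H ** M = (H ** D) ** A"
    using D(3) by (simp add: matrix_mul_assoc)
  then show ?thesis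
    unfolding A_def [symmetric] by (rule hermite_form_eqI [OF HD D(2)])
qed

lemma Xstar_iff:
  "A \<in> Xstar m \<longleftrightarrow>
     hermite_normal A \<and> det A = int m \<and> gcd (gcd (A$1$1) (A$1$2)) (A$2$2) = 1"
proof
  assume "A \<in> Xstar m"
  then obtain c b where "A = mat2 c b 0 (int m div c)"
    and "c \<ge> 1" "c dvd int m" "0 \<le> b" "b \<le> int m div c - 1"
    and "gcd (gcd c b) (int m div c) = 1"
    unfolding Xstar_def by auto
  then show "hermite_normal A \<and> det A = int m \<and> gcd (gcd (A$1$1) (A$1$2)) (A$2$2) = 1"
    by (simp add: hermite_normal_def det_2)
next
  assume "hermite_normal A \<and> det A = int m \<and> gcd (gcd (A$1$1) (A$1$2)) (A$2$2) = 1"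
  then have A: "A$2$1 = 0" "0 < A$1$1" "0 \<le> A$1$2" "A$1$2 < A$2$2"
    "A$1$1 * A$2$2 = int m" "gcd (gcd (A$1$1) (A$1$2)) (A$2$2) = 1"
    by (auto simp: hermite_normal_def det_2)
  have A22: "A$2$2 = int m div A$1$1"
    using A by (metis less_irrefl nonzero_mult_div_cancel_left)
  have "A = mat2 (A$1$1) (A$1$2) 0 (int m div A$1$1)"
    using A A22 by (intro matrix2_eqI) simp_all
  moreover have "A$1$1 dvd int m"
    using A(5) by (metis dvd_triv_left)
  ultimately show "A \<in> Xstar m"
    unfolding Xstar_def using A A22 by force
qed

section \<open>Normal forms of \<^term>\<open>Bm m ** M\<close>\<close>

lemma Bm_nth [simp]: "Bm m $1$1 = int m" "Bm m $1$2 = 0" "Bm m $2$1 = 0" "Bm m $2$2 = 1"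
  by (simp_all add: Bm_def)

lemma det_Bm: "det (Bm m) = int m"
  by (simp add: det_2)

lemma Bm_mult_Gamma0:
  assumes "H \<in> Gamma0 m"
  obtains H' where "H' \<in> SL2Z" "Bm m ** H = H' ** Bm m"
proof -
  obtain k where k: "H$2$1 = int m * k"
    using assms by (auto simp: mem_Gamma0 elim: dvdE)
  define H' where "H' = mat2 (H$1$1) (int m * H$1$2) k (H$2$2)"
  have "H' \<in> SL2Z"
    using assms k by (simp add: H'_def mem_Gamma0 det_2 algebra_simps)
  moreover have "Bm m ** H = H' ** Bm m"
    by (rule matrix2_eqI) (simp_all add: H'_def k mult.commute)
  ultimately show ?thesis
    using that by blast
qed

lemma hermite_form_Bm_Gamma0_mult:
  assumes "H \<in> Gamma0 m" and "M \<in> SL2Z" and "0 < m"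
  shows "hermite_form (Bm m ** (H ** M)) = hermite_form (Bm m ** M)"
proof -
  obtain H' where H': "H' \<in> SL2Z" "Bm m ** H = H' ** Bm m"
    using Bm_mult_Gamma0 [OF assms(1)] .
  have "Bm m ** (H ** M) = (H' ** Bm m) ** M"
    using H'(2) by (simp add: matrix_mul_assoc)
  also have "\<dots> = H' ** (Bm m ** M)"
    by (simp add: matrix_mul_assoc)
  finally show ?thesis
    using assms(2,3) H'(1) by (simp add: hermite_form_SL2Z_mult det_mul det_Bm)
qed

lemma hermite_form_Bm_eq_imp_Gamma0:
  assumes M: "M \<in> SL2Z" and N: "N \<in> SL2Z" and "0 < m"
    and eq: "hermite_form (Bm m ** M) = hermite_form (Bm m ** N)"
  shows "M ** adjugate2 N \<in> Gamma0 m"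
proof -
  define A where "A = hermite_form (Bm m ** N)"
  have "0 < det (Bm m ** M)" "0 < det (Bm m ** N)"
    using assms by (simp_all add: det_mul det_Bm)
  then obtain D1 D2 where D: "D1 \<in> SL2Z" "Bm m ** M = D1 ** A" "D2 \<in> SL2Z" "Bm m ** N = D2 ** A"
    using hermite_form eq unfolding A_def by metis
  define G where "G = D1 ** adjugate2 D2"
  have "Bm m ** (M ** adjugate2 N) = (D1 ** A) ** adjugate2 N"
    using D(2) by (simp add: matrix_mul_assoc)
  also have "\<dots> = (D1 ** ((adjugate2 D2 ** D2) ** A)) ** adjugate2 N"
    using D(3) by (simp add: adjugate2_mult_self)
  also have "\<dots> = (G ** (D2 ** A)) ** adjugate2 N"
    by (simp add: G_def matrix_mul_assoc)
  also have "\<dots> = G ** Bm m ** (N ** adjugate2 N)"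
    unfolding D(4) [symmetric] by (simp add: matrix_mul_assoc)
  also have "\<dots> = G ** Bm m"
    using N by (simp add: mult_adjugate2_self)
  finally have "(Bm m ** (M ** adjugate2 N))$2$1 = (G ** Bm m)$2$1"
    by simp
  then have "(M ** adjugate2 N)$2$1 = int m * G$2$1"
    by (simp only: matrix2_mult_nth Bm_nth) simp
  then show ?thesis
    using M N by (simp add: mem_Gamma0 det_mul det_adjugate2)
qed

lemma Bm_mult_eq_imp_Xstar:
  assumes M: "M \<in> SL2Z" and D: "D \<in> SL2Z" and A: "hermite_normal A"
    and eq: "Bm m ** M = D ** A"
  shows "A \<in> Xstar m"
proof -
  have "det A = int m"
    using arg_cong [OF eq, of det] M D by (simp add: det_mul det_Bm)
  have M21: "M$2$1 = D$2$1 * A$1$1" and M22: "M$2$2 = D$2$1 * A$1$2 + D$2$2 * A$2$2"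
    using arg_cong [OF eq, of "\<lambda>X. X$2$1"] arg_cong [OF eq, of "\<lambda>X. X$2$2"] A
    by (simp_all add: hermite_normal_def)
  define c where "c = gcd (gcd (A$1$1) (A$1$2)) (A$2$2)"
  have "c dvd A$1$1" "c dvd A$1$2" "c dvd A$2$2"
    unfolding c_def by (meson dvd_trans gcd_dvd1 gcd_dvd2)+
  then have "c dvd M$2$1" "c dvd M$2$2"
    unfolding M21 M22 by simp_all
  then have "c dvd det M"
    by (simp add: det_2)
  then have "c = 1"
    using M by (simp add: c_def)
  with A \<open>det A = int m\<close> show ?thesis
    by (simp add: Xstar_iff c_def)
qed

lemma hermite_form_Bm_Gamma0:
  assumes M: "M \<in> Gamma0 n" and "coprime n m" and "0 < m"
  obtains D where "D \<in> Gamma0 n" "Bm m ** M = D ** hermite_form (Bm m ** M)"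
    "hermite_form (Bm m ** M) \<in> Xstar m"
proof -
  define A where "A = hermite_form (Bm m ** M)"
  have "0 < det (Bm m ** M)"
    using M \<open>0 < m\<close> by (simp add: mem_Gamma0 det_mul det_Bm)
  then obtain D where D: "D \<in> SL2Z" "hermite_normal A" "Bm m ** M = D ** A"
    using hermite_form unfolding A_def by metis
  have "A \<in> Xstar m"
    using M by (intro Bm_mult_eq_imp_Xstar [OF _ D]) (simp add: mem_Gamma0)
  then have "A$1$1 * A$2$2 = int m"
    by (auto simp: Xstar_iff det_2 hermite_normal_def)
  then have "A$1$1 dvd int m"
    by (metis dvd_triv_left)
  moreover have "coprime (int n) (int m)"
    using \<open>coprime n m\<close> by simp
  ultimately have "coprime (int n) (A$1$1)"
    by (rule coprime_divisors [OF dvd_refl])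
  moreover have "M$2$1 = D$2$1 * A$1$1"
    using arg_cong [OF D(3), of "\<lambda>X. X$2$1"] D(2) by (simp add: hermite_normal_def)
  ultimately have "int n dvd D$2$1"
    using M by (simp add: mem_Gamma0 coprime_dvd_mult_left_iff)
  then have "D \<in> Gamma0 n"
    using D(1) by (simp add: mem_Gamma0)
  with D(3) \<open>A \<in> Xstar m\<close> show ?thesis
    using that unfolding A_def by blast
qed

lemma coprime_if_no_common_prime:
  fixes a b :: "'a :: factorial_semiring"
  assumes "b \<noteq> 0" and "\<And>p. prime p \<Longrightarrow> p dvd b \<Longrightarrow> \<not> p dvd a"
  shows "coprime a b"
proof (rule coprimeI)
  fix d assume d: "d dvd a" "d dvd b"
  show "is_unit d"
  proof (rule ccontr)
    assume "\<not> is_unit d"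
    moreover have "d \<noteq> 0"
      using d(2) assms(1) by auto
    ultimately obtain p where "p dvd d" "prime p"
      using prime_divisor_exists by blast
    then show False
      using d assms(2) dvd_trans by blast
  qed
qed

lemma ex_coprime_diff:
  fixes b c e :: int
  assumes "e \<noteq> 0" and gcd: "gcd (gcd c b) e = 1"
  shows "\<exists>t. coprime (c * t - b) e"
proof -
  define S where "S = {p \<in> prime_factors e. \<not> p dvd b}"
  define t where "t = \<Prod>S"
  have "finite S"
    by (simp add: S_def)
  have prime_dvd_t: "p dvd t \<longleftrightarrow> \<not> p dvd b" if p: "prime p" "p dvd e" for p
  proof -
    have "p dvd t \<longleftrightarrow> (\<exists>q \<in> S. p dvd q)"
      unfolding t_def using prime_dvd_prod_iff [OF \<open>finite S\<close> p(1)] by simp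
    also have "\<dots> \<longleftrightarrow> p \<in> S"
      using p(1) by (auto simp: S_def dest: primes_dvd_imp_eq in_prime_factors_imp_prime)
    also have "\<dots> \<longleftrightarrow> \<not> p dvd b"
      using p assms(1) by (auto simp: S_def intro: prime_factorsI)
    finally show ?thesis .
  qed
  have no_prime_divisor: "\<not> p dvd c * t - b" if p: "prime p" "p dvd e" for p
  proof
    assume p_dvd: "p dvd c * t - b"
    show False
    proof (cases "p dvd b")
      case True
      have "\<not> p dvd c"
      proof
        assume "p dvd c"
        then have "p dvd gcd (gcd c b) e"
          using True p(2) by simp
        then show False
          using gcd p(1) by (simp add: not_prime_unit)
      qed
      moreover have "p dvd c * t"
        using dvd_add [OF p_dvd True] by simp
      ultimately show False
        using True p prime_dvd_t by (simp add: prime_dvd_mult_iff)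
    next
      case False
      then have "p dvd c * t"
        using p prime_dvd_t by simp
      then have "p dvd c * t - (c * t - b)"
        using p_dvd by (rule dvd_diff)
      with False show False
        by simp
    qed
  qed
  have "coprime (c * t - b) e"
    using assms(1) no_prime_divisor by (rule coprime_if_no_common_prime)
  then show ?thesis ..
qed

lemma Xstar_imp_hermite_form_Bm:
  assumes "A \<in> Xstar m" and "coprime n m"
  obtains M where "M \<in> Gamma0 n" "hermite_form (Bm m ** M) = A"
proof -
  define c b e where "c = A$1$1" "b = A$1$2" "e = A$2$2"
  have A: "hermite_normal A" "c * e = int m" "gcd (gcd c b) e = 1"
    using assms(1) by (auto simp: Xstar_iff det_2 hermite_normal_def c_b_e_def)
  have "e \<noteq> 0"
    using A(1) by (simp add: hermite_normal_def c_b_e_def)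
  then obtain t where "coprime (c * t - b) e"
    using ex_coprime_diff A(3) by meson
  moreover have "coprime e (int n)"
    using assms(2) A(2) by (metis coprime_commute coprime_int_iff coprime_mult_right_iff)
  ultimately have "coprime e (int n * (c * t - b))"
    by (simp add: coprime_commute)
  then obtain u v where uv: "u * e + v * (int n * (c * t - b)) = 1"
    using bezout_int [of e "int n * (c * t - b)"] by auto
  \<comment> \<open>\<^term>\<open>M\<close> has first row (1, t), so \<^term>\<open>Bm m ** M = D ** A\<close> fixes the first row
    (e, c t - b) of \<^term>\<open>D\<close>; it is primitive by the choice of t, and Bezout completes it
    with n dividing the lower left entry.\<close>
  define D M where "D = mat2 e (c * t - b) (- int n * v) u"
    "M = mat2 1 t (- int n * v * c) (- int n * v * b + u * e)"
  have "D \<in> SL2Z"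
    using uv by (simp add: D_M_def det_2 algebra_simps)
  moreover have "M \<in> Gamma0 n"
    using uv by (simp add: D_M_def mem_Gamma0 det_2 algebra_simps)
  moreover have "Bm m ** M = D ** A"
    using A(1) by (intro matrix2_eqI)
      (simp_all add: D_M_def hermite_normal_def c_b_e_def algebra_simps flip: A(2))
  ultimately show ?thesis
    using that hermite_form_eqI A(1) by metis
qed

lemma rep_system_Gamma0: "rep_system n m R \<Longrightarrow> j \<in> Iset n m \<Longrightarrow> R j \<in> Gamma0 n"
  by (simp add: rep_system_def)

lemma rep_system_cover:
  assumes "rep_system n m R" and "M \<in> Gamma0 n"
  obtains j H where "j \<in> Iset n m" "H \<in> Gamma0 (n * m)" "R j = H ** M"
proof -
  have "rcoset2 (Gamma0 (n * m)) M \<in> (\<lambda>j. rcoset2 (Gamma0 (n * m)) (R j)) ` Iset n m"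
    using assms unfolding rep_system_def rcosets2_def bij_betw_def by blast
  then obtain j where "j \<in> Iset n m" "rcoset2 (Gamma0 (n * m)) (R j) = rcoset2 (Gamma0 (n * m)) M"
    by auto
  then show ?thesis
    using that rcoset2_Gamma0_eqD by metis
qed

lemma rep_system_eqI:
  assumes R: "rep_system n m R" and ij: "i \<in> Iset n m" "j \<in> Iset n m"
    and "R i ** adjugate2 (R j) \<in> Gamma0 (n * m)"
  shows "i = j"
proof -
  have "det (R j) = 1"
    using rep_system_Gamma0 [OF R ij(2)] by (simp add: mem_Gamma0)
  then have "R i = (R i ** adjugate2 (R j)) ** R j"
    by (simp add: adjugate2_mult_self flip: matrix_mul_assoc)
  then have "rcoset2 (Gamma0 (n * m)) (R i) = rcoset2 (Gamma0 (n * m)) (R j)"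
    using rcoset2_Gamma0_mult assms(4) by metis
  then show ?thesis
    using R ij unfolding rep_system_def bij_betw_def inj_on_def by blast
qed

lemma inj_on_hermite_form_Bm_rep_system:
  assumes R: "rep_system n m R" and "coprime n m" and "0 < m"
  shows "inj_on (\<lambda>j. hermite_form (Bm m ** R j)) (Iset n m)"
proof (rule inj_onI)
  fix i j assume ij: "i \<in> Iset n m" "j \<in> Iset n m"
    and eq: "hermite_form (Bm m ** R i) = hermite_form (Bm m ** R j)"
  have Ri: "R i \<in> Gamma0 n" and Rj: "R j \<in> Gamma0 n"
    using rep_system_Gamma0 [OF R] ij by auto
  have "R i ** adjugate2 (R j) \<in> Gamma0 m"
    using eq Ri Rj \<open>0 < m\<close> by (intro hermite_form_Bm_eq_imp_Gamma0) (simp_all add: mem_Gamma0)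
  moreover have "R i ** adjugate2 (R j) \<in> Gamma0 n"
    using Ri Rj by (simp add: Gamma0_mult Gamma0_adjugate2)
  ultimately have "R i ** adjugate2 (R j) \<in> Gamma0 (n * m)"
    using Gamma0_Int_coprime [OF \<open>coprime n m\<close>] by blast
  then show "i = j"
    using rep_system_eqI [OF R ij] by blast
qed

lemma Xstar_subset_hermite_form_Bm_rep_system:
  assumes R: "rep_system n m R" and "coprime n m" and "0 < m"
  shows "Xstar m \<subseteq> (\<lambda>j. hermite_form (Bm m ** R j)) ` Iset n m"
proof
  fix X assume "X \<in> Xstar m"
  then obtain M where M: "M \<in> Gamma0 n" "hermite_form (Bm m ** M) = X"
    using Xstar_imp_hermite_form_Bm \<open>coprime n m\<close> by blast
  then obtain j H where j: "j \<in> Iset n m" and H: "H \<in> Gamma0 (n * m)" "R j = H ** M"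
    using rep_system_cover R by blast
  have "H \<in> Gamma0 m"
    using H(1) Gamma0_Int_coprime [OF \<open>coprime n m\<close>] by blast
  then have "hermite_form (Bm m ** R j) = X"
    using M \<open>0 < m\<close> H(2) by (simp add: mem_Gamma0 hermite_form_Bm_Gamma0_mult)
  then show "X \<in> (\<lambda>j. hermite_form (Bm m ** R j)) ` Iset n m"
    using j by blast
qed

theorem mainTheorem5:
  fixes n m :: nat and R :: "nat \<Rightarrow> int^2^2"
  assumes "n \<ge> 1" and "m \<ge> 1" and "coprime n m"
    and "rep_system n m R"
  shows "\<exists>A :: nat \<Rightarrow> int^2^2.
           (\<forall>j \<in> Iset n m. A j \<in> Xstar m \<and>
              ratm (Bm m) ** ratm (R j) ** matrix_inv (ratm (A j)) \<in> ratm ` Gamma0 n)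
           \<and> bij_betw A (Iset n m) (Xstar m)"
proof -
  define A where "A j = hermite_form (Bm m ** R j)" for j
  have m: "0 < m"
    using assms(2) by simp
  have A: "A j \<in> Xstar m \<and> ratm (Bm m) ** ratm (R j) ** matrix_inv (ratm (A j)) \<in> ratm ` Gamma0 n"
    if j: "j \<in> Iset n m" for j
  proof -
    obtain D where "D \<in> Gamma0 n" "Bm m ** R j = D ** A j" "A j \<in> Xstar m"
      using hermite_form_Bm_Gamma0 [OF rep_system_Gamma0 [OF assms(4) j] assms(3) m]
      unfolding A_def .
    moreover from this have "det (A j) \<noteq> 0"
      using m by (simp add: Xstar_iff)
    ultimately show ?thesis
      by (simp add: ratm_mult_matrix_inv flip: ratm_mult)
  qed
  moreover have "bij_betw A (Iset n m) (Xstar m)"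
    using A inj_on_hermite_form_Bm_rep_system Xstar_subset_hermite_form_Bm_rep_system assms(3,4) m
    unfolding bij_betw_def A_def by blast
  ultimately show ?thesis
    by blast
qed

end
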